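(* Let $a>0$ and, for $x_i\in\mathbb{R}$, let $P_+^a(x_i)$ (resp. $P_-^a(x_i)$) be the smallest $x>x_i$ at which the solution of $y'=-ay-\sin(3\pi x/2)$ (resp. $y'=-ay-\sin(\pi x/2)$) with $y(x_i)=0$ vanishes. Then $$P_+^a(4n-2)\in\left(4n-\tfrac43,\,4n-\tfrac23\right)\quad\forall n\in\mathbb{N}\setminus\{0\},\qquad P_-^a(4n)\in(4n+2,\,4n+4)\quad\forall n\in\mathbb{N}.$$ *)

theory Defs
  imports "HOL-Analysis.Analysis"
begin

definition ivp_sol :: "real \<Rightarrow> (real \<Rightarrow> real) \<Rightarrow> real \<Rightarrow> (real \<Rightarrow> real) \<Rightarrow> bool" where
  "ivp_sol a f xi y \<longleftrightarrow> y xi = 0 \<and>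
     (\<forall>x. (y has_real_derivative (- a * y x - f x)) (at x))"

definition ivp :: "real \<Rightarrow> (real \<Rightarrow> real) \<Rightarrow> real \<Rightarrow> real \<Rightarrow> real" where
  "ivp a f xi = (THE y. ivp_sol a f xi y)"

definition first_zero :: "real \<Rightarrow> (real \<Rightarrow> real) \<Rightarrow> real \<Rightarrow> real" where
  "first_zero a f xi = (THE p. p > xi \<and> ivp a f xi p = 0 \<and>
       (\<forall>x. xi < x \<and> x < p \<longrightarrow> ivp a f xi x \<noteq> 0))"

definition P_plus :: "real \<Rightarrow> real \<Rightarrow> real" where
  "P_plus a xi = first_zero a (\<lambda>x. sin (3 * pi * x / 2)) xi"

definition P_minus :: "real \<Rightarrow> real \<Rightarrow> real" where
  "P_minus a xi = first_zero a (\<lambda>x. sin (pi * x / 2)) xi"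

end

theory Submission
  imports Defs
begin

text \<open>
  With the integrating factor, the solution is \<open>y x = exp (-a x) g x\<close> where
  \<open>g' x = - exp (a x) f x\<close> and \<open>g xi = 0\<close>, so \<open>y\<close> and \<open>g\<close> have the same zeros.
  At both initial points the forcing term is \<open>c sin (w (x - xi))\<close> with \<open>c = \<plusminus>1\<close>.
  Hence \<open>c g\<close> strictly decreases on the first half period \<open>(xi, xi + pi/w)\<close>, where it
  cannot vanish, and strictly increases on the second one. An explicit antiderivative
  shows that \<open>c g\<close> is positive after a full period, because the weight \<open>exp (a x)\<close>
  grows; so the first zero lies in \<open>(xi + pi/w, xi + 2 pi/w)\<close>, which for
  \<open>w = 3 pi/2\<close> and \<open>w = pi/2\<close> are the stated intervals.
\<close>

lemma ivp_sol_unique: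
  assumes "ivp_sol a f xi y" "ivp_sol a f xi z"
  shows "y = z"
proof
  fix x
  define k where "k t = exp (a * t) * (y t - z t)" for t
  have "(k has_real_derivative 0) (at t)" for t
  proof -
    have "(k has_real_derivative
        a * exp (a * t) * (y t - z t) + exp (a * t) * ((- a * y t - f t) - (- a * z t - f t))) (at t)"
      unfolding k_def using assms unfolding ivp_sol_def by (auto intro!: derivative_eq_intros)
    then show ?thesis by (simp add: algebra_simps)
  qed
  then have "k x = k xi" using DERIV_isconst_all by blast
  also have "k xi = 0" using assms unfolding ivp_sol_def k_def by simp
  finally show "y x = z x" unfolding k_def by simp
qed

lemma ivp_eqI: "ivp_sol a f xi y \<Longrightarrow> ivp a f xi = y"
  unfolding ivp_def using ivp_sol_unique by blast

lemma ivp_sol_integrating_factor: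
  assumes "\<And>x. (g has_real_derivative - exp (a * x) * f x) (at x)" and "g xi = 0"
  shows "ivp_sol a f xi (\<lambda>x. exp (- a * x) * g x)"
  unfolding ivp_sol_def
proof (intro conjI allI)
  show "exp (- a * xi) * g xi = 0" using assms(2) by simp
next
  fix x
  have "((\<lambda>x. exp (- a * x) * g x) has_real_derivative
      - a * exp (- a * x) * g x + exp (- a * x) * (- exp (a * x) * f x)) (at x)"
    using assms(1) by (auto intro!: derivative_eq_intros)
  moreover have "exp (- a * x) * exp (a * x) = 1" by (simp flip: exp_add)
  ultimately show "((\<lambda>x. exp (- a * x) * g x) has_real_derivative
      - a * (exp (- a * x) * g x) - f x) (at x)"
    by (simp add: algebra_simps)
qed

lemma first_zero_eqI:
  assumes "ivp a f xi = y" "xi < p" "y p = 0" "\<And>x. xi < x \<Longrightarrow> x < p \<Longrightarrow> y x \<noteq> 0"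
  shows "first_zero a f xi = p"
  unfolding first_zero_def assms(1)
proof (rule the_equality)
  show "xi < p \<and> y p = 0 \<and> (\<forall>x. xi < x \<and> x < p \<longrightarrow> y x \<noteq> 0)"
    using assms by blast
next
  fix q assume q: "xi < q \<and> y q = 0 \<and> (\<forall>x. xi < x \<and> x < q \<longrightarrow> y x \<noteq> 0)"
  then have "\<not> q < p" "\<not> p < q" using assms by auto
  then show "q = p" by linarith
qed

lemma first_zero_after_descent_ascent:
  fixes G G' :: "real \<Rightarrow> real"
  assumes deriv: "\<And>x. (G has_real_derivative G' x) (at x)" and "G xi = 0"
    and "xi < c" "c < d"
    and descent: "\<And>x. xi < x \<Longrightarrow> x < c \<Longrightarrow> G' x < 0"
    and ascent: "\<And>x. c < x \<Longrightarrow> x < d \<Longrightarrow> G' x > 0"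
    and "G d > 0"
  obtains p where "c < p" "p < d" "G p = 0" "\<And>x. xi < x \<Longrightarrow> x < p \<Longrightarrow> G x \<noteq> 0"
proof -
  have cont: "continuous_on S G" for S
    using deriv by (meson DERIV_continuous continuous_at_imp_continuous_on)
  have neg: "G x < 0" if "xi < x" "x \<le> c" for x
  proof -
    have "G x < G xi"
      by (rule DERIV_neg_imp_decreasing_open[OF \<open>xi < x\<close> _ cont])
        (use that in \<open>force intro: deriv descent\<close>)
    with \<open>G xi = 0\<close> show ?thesis by simp
  qed
  have incr: "G u < G v" if "c \<le> u" "u < v" "v \<le> d" for u v
    by (rule DERIV_pos_imp_increasing_open[OF \<open>u < v\<close> _ cont])
      (use that in \<open>force intro: deriv ascent\<close>)
  have "G c < 0" using neg \<open>xi < c\<close> by simp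
  then obtain p where p: "c \<le> p" "p \<le> d" "G p = 0"
    using IVT'[of G c 0 d, OF _ _ _ cont] \<open>G d > 0\<close> \<open>c < d\<close> by auto
  with \<open>G c < 0\<close> \<open>G d > 0\<close> have "c < p" "p < d" by (auto simp: order.order_iff_strict)
  moreover have "G x \<noteq> 0" if "xi < x" "x < p" for x
    using neg[of x] incr[of x p] that p \<open>c < p\<close> \<open>p < d\<close> by (cases "x \<le> c") auto
  ultimately show ?thesis using that p(3) by blast
qed

lemma first_zero_in_interval:
  assumes deriv: "\<And>x. (g has_real_derivative - exp (a * x) * f x) (at x)" and "g xi = 0"
    and "xi < c" "c < d"
    and descent: "\<And>x. xi < x \<Longrightarrow> x < c \<Longrightarrow> \<sigma> * f x > 0"
    and ascent: "\<And>x. c < x \<Longrightarrow> x < d \<Longrightarrow> \<sigma> * f x < 0"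
    and "\<sigma> * g d > 0"
  shows "first_zero a f xi \<in> {c<..<d}"
proof -
  have deriv_scaled:
    "((\<lambda>x. \<sigma> * g x) has_real_derivative - exp (a * x) * (\<sigma> * f x)) (at x)" for x
    using DERIV_cmult[OF deriv[of x], of \<sigma>] by (simp add: algebra_simps)
  have scaled_descent: "- exp (a * x) * (\<sigma> * f x) < 0" if "xi < x" "x < c" for x
    using descent[OF that] by simp
  have scaled_ascent: "- exp (a * x) * (\<sigma> * f x) > 0" if "c < x" "x < d" for x
    using ascent[OF that] by (simp add: mult_pos_neg)
  obtain p where p: "c < p" "p < d" "\<sigma> * g p = 0"
      and no_zero: "\<And>x. xi < x \<Longrightarrow> x < p \<Longrightarrow> \<sigma> * g x \<noteq> 0"
    by (rule first_zero_after_descent_ascent[OF deriv_scaled _ \<open>xi < c\<close> \<open>c < d\<close>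
        scaled_descent scaled_ascent \<open>\<sigma> * g d > 0\<close>]) (use \<open>g xi = 0\<close> in simp_all)
  have "first_zero a f xi = p"
  proof (rule first_zero_eqI)
    show "ivp a f xi = (\<lambda>x. exp (- a * x) * g x)"
      by (rule ivp_eqI[OF ivp_sol_integrating_factor[OF deriv \<open>g xi = 0\<close>]])
  qed (use p no_zero \<open>xi < c\<close> in auto)
  with p show ?thesis by simp
qed

lemma has_real_derivative_exp_sin_antiderivative:
  fixes a w :: real
  assumes "w > 0"
  shows "((\<lambda>x. exp (a * x) * (a * sin (w * (x - xi)) - w * cos (w * (x - xi))) / (a\<^sup>2 + w\<^sup>2))
      has_real_derivative exp (a * x) * sin (w * (x - xi))) (at x)"
proof -
  have "a\<^sup>2 + w\<^sup>2 > 0" using assms by (simp add: add_nonneg_pos)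
  then have nz: "a\<^sup>2 + w\<^sup>2 \<noteq> 0" by linarith
  have "((\<lambda>x. exp (a * x) * (a * sin (w * (x - xi)) - w * cos (w * (x - xi))) / (a\<^sup>2 + w\<^sup>2))
      has_real_derivative
        (a * exp (a * x) * (a * sin (w * (x - xi)) - w * cos (w * (x - xi)))
         + exp (a * x) * (a * (cos (w * (x - xi)) * w) + w * (sin (w * (x - xi)) * w))) / (a\<^sup>2 + w\<^sup>2)) (at x)"
    using nz by (auto intro!: derivative_eq_intros)
  moreover have "(a * exp (a * x) * (a * sin (w * (x - xi)) - w * cos (w * (x - xi)))
      + exp (a * x) * (a * (cos (w * (x - xi)) * w) + w * (sin (w * (x - xi)) * w))) / (a\<^sup>2 + w\<^sup>2)
      = exp (a * x) * sin (w * (x - xi))"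
    using nz by (simp add: field_simps power2_eq_square)
  ultimately show ?thesis by simp
qed

lemma first_zero_sin_forcing:
  fixes a w c :: real
  assumes "a > 0" "w > 0" "c \<noteq> 0"
  shows "first_zero a (\<lambda>x. c * sin (w * (x - xi))) xi \<in> {xi + pi / w <..< xi + 2 * pi / w}"
proof -
  define F where
    "F x = exp (a * x) * (a * sin (w * (x - xi)) - w * cos (w * (x - xi))) / (a\<^sup>2 + w\<^sup>2)" for x
  define g where "g x = - c * (F x - F xi)" for x
  have "c * c > 0" using \<open>c \<noteq> 0\<close> by (auto simp: zero_less_mult_iff linorder_neq_iff)
  have deriv: "(g has_real_derivative - exp (a * x) * (c * sin (w * (x - xi)))) (at x)" for x
  proof -
    have "(F has_real_derivative exp (a * x) * sin (w * (x - xi))) (at x)"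
      unfolding F_def by (rule has_real_derivative_exp_sin_antiderivative[OF \<open>w > 0\<close>])
    from DERIV_cmult[OF DERIV_diff[OF this DERIV_const[of "F xi"]], of "- c"] show ?thesis
      unfolding g_def by (simp add: algebra_simps)
  qed
  have half_periods: "0 < w * (x - xi) \<longleftrightarrow> xi < x" "w * (x - xi) < pi \<longleftrightarrow> x < xi + pi / w"
    "pi < w * (x - xi) \<longleftrightarrow> xi + pi / w < x" "w * (x - xi) < 2 * pi \<longleftrightarrow> x < xi + 2 * pi / w" for x
    using \<open>w > 0\<close> by (auto simp: field_simps)
  have descent: "c * (c * sin (w * (x - xi))) > 0" if "xi < x" "x < xi + pi / w" for x
    using sin_gt_zero[of "w * (x - xi)"] that half_periods \<open>c * c > 0\<close> by (simp flip: mult.assoc)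
  have ascent: "c * (c * sin (w * (x - xi))) < 0" if "xi + pi / w < x" "x < xi + 2 * pi / w" for x
    using sin_lt_zero[of "w * (x - xi)"] that half_periods \<open>c * c > 0\<close>
    by (simp add: mult_pos_neg flip: mult.assoc)
  define d where "d = xi + 2 * pi / w"
  have "w * (d - xi) = 2 * pi" unfolding d_def using \<open>w > 0\<close> by simp
  then have "F d = - w * exp (a * d) / (a\<^sup>2 + w\<^sup>2)" unfolding F_def by simp
  moreover have "F xi = - w * exp (a * xi) / (a\<^sup>2 + w\<^sup>2)" unfolding F_def by simp
  moreover have "w * exp (a * xi) < w * exp (a * d)" unfolding d_def using assms by simp
  moreover have "a\<^sup>2 + w\<^sup>2 > 0" using \<open>w > 0\<close> by (simp add: add_nonneg_pos)
  ultimately have "F d < F xi" by (simp add: divide_strict_right_mono)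
  moreover have "c * g d = c * c * (F xi - F d)" unfolding g_def by (simp add: algebra_simps)
  ultimately have "c * g d > 0" using \<open>c * c > 0\<close> by (metis diff_gt_0_iff_gt mult_pos_pos)
  show ?thesis
    by (rule first_zero_in_interval[OF deriv _ _ _ descent ascent \<open>c * g d > 0\<close>[unfolded d_def]])
      (use assms in \<open>simp_all add: g_def divide_strict_right_mono\<close>)
qed

lemma sin_three_half_pi_shift:
  assumes "n \<ge> 1"
  shows "sin (3 * pi * x / 2) = - sin (3 * pi / 2 * (x - (4 * real n - 2)))"
proof -
  have "3 * pi * x / 2 = 3 * pi / 2 * (x - (4 * real n - 2)) + pi + 2 * real (3 * n - 2) * pi"
    using assms by (simp add: of_nat_diff field_simps)
  then show ?thesis by (simp only: sin_add sin_2npi cos_2npi) simp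
qed

lemma sin_half_pi_shift: "sin (pi * x / 2) = sin (pi / 2 * (x - 4 * real n))"
proof -
  have "pi * x / 2 = pi / 2 * (x - 4 * real n) + 2 * real n * pi"
    by (simp add: field_simps)
  then show ?thesis by (simp only: sin_add sin_2npi cos_2npi)
qed

theorem lemma7:
  fixes a :: real
  assumes "a > 0"
  shows "(\<forall>n::nat. n \<ge> 1 \<longrightarrow>
            P_plus a (4 * real n - 2) \<in> {4 * real n - 4/3 <..< 4 * real n - 2/3}) \<and>
         (\<forall>n::nat. P_minus a (4 * real n) \<in> {4 * real n + 2 <..< 4 * real n + 4})"
proof (intro conjI allI impI)
  fix n :: nat assume "n \<ge> 1"
  have forcing:
    "(\<lambda>x. sin (3 * pi * x / 2)) = (\<lambda>x. - 1 * sin (3 * pi / 2 * (x - (4 * real n - 2))))"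
    by (simp only: sin_three_half_pi_shift[OF \<open>n \<ge> 1\<close>] mult_minus1)
  have "first_zero a (\<lambda>x. - 1 * sin (3 * pi / 2 * (x - (4 * real n - 2)))) (4 * real n - 2)
      \<in> {4 * real n - 2 + pi / (3 * pi / 2) <..< 4 * real n - 2 + 2 * pi / (3 * pi / 2)}"
    by (rule first_zero_sin_forcing) (use \<open>a > 0\<close> in simp_all)
  then show "P_plus a (4 * real n - 2) \<in> {4 * real n - 4/3 <..< 4 * real n - 2/3}"
    unfolding P_plus_def forcing by simp
next
  fix n :: nat
  have forcing: "(\<lambda>x. sin (pi * x / 2)) = (\<lambda>x. 1 * sin (pi / 2 * (x - 4 * real n)))"
    by (simp only: sin_half_pi_shift[of _ n] mult_1)
  have "first_zero a (\<lambda>x. 1 * sin (pi / 2 * (x - 4 * real n))) (4 * real n)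
      \<in> {4 * real n + pi / (pi / 2) <..< 4 * real n + 2 * pi / (pi / 2)}"
    by (rule first_zero_sin_forcing) (use \<open>a > 0\<close> in simp_all)
  then show "P_minus a (4 * real n) \<in> {4 * real n + 2 <..< 4 * real n + 4}"
    unfolding P_minus_def forcing by simp
qed

end
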